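(* Let $d\ge1$, $0<\epsilon<1$, and let $C_1,\ldots,C_n\in\mathbb{R}^{d+1}$ be a Pareto-optimal market for $\textsc{ProductDesign}(d)$. Let $r=\max\{\operatorname{ppu}(C_i): i\in\{1,\ldots,n\}\}$, $E=1/(1-\epsilon)$, $\ell=\lceil\log_E n\rceil$, and for $i\in\{0,\ldots,\ell\}$ let $H_i=\{(p,q_1,\ldots,q_d): p-\sum_{k=1}^d q_k=r(1-\epsilon)^i\}$. Then for every product $P^*=(p^*,q_1^*,\ldots,q_d^* )$ there exists a product $P\in H_i$ for some $i\in\{0,\ldots,\ell\}$ with $\operatorname{profit}(P)\ge(1-\epsilon)\operatorname{profit}(P^* )$.
   Context: A product $P=(p,q_1,\ldots,q_d)$ has price $p$ and qualities $q_k$; $\operatorname{ppu}(P)=p-\sum_k q_k$. Customer $C_i=(p_i,q_{i,1},\ldots,q_{i,d})$ buys $P$ iff $p\le p_i$ and $q_k\ge q_{i,k}$ for all $k$. $\operatorname{profit}(P)=\operatorname{ppu}(P)\cdot|\{i: C_i\text{ buys }P\}|$. Pareto-optimal: no two customers $C_i,C_j$ with $q_{i,k}>q_{j,k}$ for all $k$ and $p_i<p_j$. *)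

theory Defs
  imports Complex_Main
begin

text \<open>A point of R^(d+1) is represented as a pair (p, q) of a price p and a quality
  vector q, of which only the coordinates q 0, ..., q (d-1) are relevant.
  Customers are indexed by 0, ..., n-1.\<close>

type_synonym point = "real \<times> (nat \<Rightarrow> real)"

definition ppu :: "nat \<Rightarrow> point \<Rightarrow> real" where
  "ppu d P = fst P - (\<Sum>k<d. snd P k)"

definition buys :: "nat \<Rightarrow> point \<Rightarrow> point \<Rightarrow> bool" where
  "buys d C P \<longleftrightarrow> fst P \<le> fst C \<and> (\<forall>k<d. snd P k \<ge> snd C k)"

definition profit :: "nat \<Rightarrow> nat \<Rightarrow> (nat \<Rightarrow> point) \<Rightarrow> point \<Rightarrow> real" where
  "profit d n C P = ppu d P * real (card {i. i < n \<and> buys d (C i) P})"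

definition pareto_optimal :: "nat \<Rightarrow> nat \<Rightarrow> (nat \<Rightarrow> point) \<Rightarrow> bool" where
  "pareto_optimal d n C \<longleftrightarrow>
     \<not> (\<exists>i<n. \<exists>j<n. (\<forall>k<d. snd (C i) k > snd (C j) k) \<and> fst (C i) < fst (C j))"

end

theory Submission
  imports Defs
begin

text \<open>Lowering the price of a product while keeping its qualities loses no customer, and a
  customer buys only products whose price per unit is at most its own, so every profitable
  product has price per unit at most \<open>r\<close>. If the price per unit \<open>a\<close> of \<open>P*\<close> is at least
  \<open>r(1-\<epsilon>)^\<ell>\<close>, lower it to the first level \<open>r(1-\<epsilon>)^i \<le> a\<close>, which is at least \<open>(1-\<epsilon>)a\<close>.
  Otherwise \<open>profit(P*) < r(1-\<epsilon>)^\<ell> n \<le> r\<close>, and the customer attaining \<open>r\<close>, offered as a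
  product, already earns \<open>r\<close>.\<close>

definition buyers :: "nat \<Rightarrow> nat \<Rightarrow> (nat \<Rightarrow> point) \<Rightarrow> point \<Rightarrow> nat set" where
  "buyers d n C P = {i. i < n \<and> buys d (C i) P}"

lemma profit_eq_ppu_card_buyers: "profit d n C P = ppu d P * real (card (buyers d n C P))"
  unfolding profit_def buyers_def by simp

lemma finite_buyers: "finite (buyers d n C P)"
  unfolding buyers_def by auto

lemma card_buyers_le: "card (buyers d n C P) \<le> n"
  using card_mono[of "{..<n}" "buyers d n C P"] unfolding buyers_def by auto

lemma ppu_le_ppu_if_buys: "buys d C P \<Longrightarrow> ppu d P \<le> ppu d C"
  unfolding buys_def ppu_def using sum_mono[of "{..<d}" "snd C" "snd P"] by auto

lemma buyers_mono_lower_price: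
  "fst P' \<le> fst P \<Longrightarrow> snd P' = snd P \<Longrightarrow> buyers d n C P \<subseteq> buyers d n C P'"
  unfolding buyers_def buys_def by auto

lemma exists_cheaper_product:
  assumes "t \<le> ppu d P"
  obtains P' where "ppu d P' = t" and "buyers d n C P \<subseteq> buyers d n C P'"
proof
  let ?P' = "(fst P - (ppu d P - t), snd P)"
  show "ppu d ?P' = t" by (simp add: ppu_def)
  show "buyers d n C P \<subseteq> buyers d n C ?P'"
    using assms by (intro buyers_mono_lower_price) auto
qed

text \<open>The first quality coordinate absorbs the difference between a price above every
  customer's and the prescribed price per unit; this is where \<open>d \<ge> 1\<close> is needed.\<close>
lemma exists_product_without_buyers:
  assumes "d \<ge> 1"
  obtains P where "ppu d P = t" and "buyers d n C P = {}"
proof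
  define p where "p = Max (fst ` C ` {..<n}) + 1"
  let ?P = "(p, \<lambda>k. if k = 0 then p - t else 0) :: point"
  have "(\<Sum>k<d. if k = 0 then p - t else 0) = p - t"
    using assms by (simp add: sum.delta)
  then show "ppu d ?P = t" by (simp add: ppu_def)
  have "fst (C i) < p" if "i < n" for i
  proof -
    have "fst (C i) \<le> Max (fst ` C ` {..<n})" using that by (intro Max_ge) auto
    then show ?thesis unfolding p_def by simp
  qed
  then show "buyers d n C ?P = {}" unfolding buyers_def buys_def by force
qed

lemma exists_geometric_level:
  fixes a r c :: real
  assumes "0 < c" "c < 1" "0 < a" "a \<le> r" "r * c ^ L \<le> a"
  shows "\<exists>i\<le>L. r * c ^ i \<le> a \<and> c * a \<le> r * c ^ i"
proof -
  define i where "i = (LEAST i. r * c ^ i \<le> a)"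
  have "i \<le> L" unfolding i_def using assms(5) by (rule Least_le)
  moreover have below: "r * c ^ i \<le> a" unfolding i_def using assms(5) by (rule LeastI)
  moreover have "c * a \<le> r * c ^ i"
  proof (cases i)
    case 0
    have "c * a \<le> a" using assms(1-3) by (intro mult_left_le_one_le) auto
    then show ?thesis using 0 assms(4) by simp
  next
    case (Suc k)
    then have "\<not> r * c ^ k \<le> a" unfolding i_def by (metis lessI not_less_Least)
    then show ?thesis using Suc assms(1) by simp
  qed
  ultimately show ?thesis by blast
qed

lemma le_power_nat_ceiling_log:
  fixes b x :: real
  assumes "1 < b" "0 < x"
  shows "x \<le> b ^ nat \<lceil>log b x\<rceil>"
proof -
  have "x = b powr log b x" using assms by simp
  also have "\<dots> \<le> b powr real (nat \<lceil>log b x\<rceil>)"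
    using assms(1) by (intro powr_mono) linarith+
  also have "\<dots> = b ^ nat \<lceil>log b x\<rceil>" using assms(1) by (simp add: powr_realpow)
  finally show ?thesis .
qed

lemma exists_level_product_if_profitable:
  fixes c r :: real
  assumes "0 < c" "c < 1" "c ^ L * n \<le> 1"
    and r_ub: "\<And>i. i < n \<Longrightarrow> ppu d (C i) \<le> r" and "j < n" "ppu d (C j) = r"
    and profitable: "0 < profit d n C Ps"
  shows "\<exists>i\<le>L. \<exists>P. ppu d P = r * c ^ i \<and> c * profit d n C Ps \<le> profit d n C P"
proof -
  let ?a = "ppu d Ps" and ?m = "real (card (buyers d n C Ps))"
  have m_pos: "0 < ?m" and a_pos: "0 < ?a"
    using profitable by (auto simp: profit_eq_ppu_card_buyers zero_less_mult_iff)
  from m_pos obtain k where "k \<in> buyers d n C Ps" by fastforce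
  then have a_le_r: "?a \<le> r"
    using r_ub ppu_le_ppu_if_buys unfolding buyers_def by (metis (mono_tags) mem_Collect_eq order_trans)
  show ?thesis
  proof (cases "r * c ^ L \<le> ?a")
    case True
    then obtain i where "i \<le> L" and level: "r * c ^ i \<le> ?a" "c * ?a \<le> r * c ^ i"
      using exists_geometric_level[OF assms(1,2) a_pos a_le_r] by blast
    obtain P where P: "ppu d P = r * c ^ i" "buyers d n C Ps \<subseteq> buyers d n C P"
      using exists_cheaper_product[OF level(1)] by blast
    have "0 \<le> r * c ^ i" using level(2) assms(1) a_pos by (smt (verit) mult_pos_pos)
    have "c * profit d n C Ps = (c * ?a) * ?m" by (simp add: profit_eq_ppu_card_buyers)
    also have "\<dots> \<le> r * c ^ i * ?m" using level(2) m_pos by simp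
    also have "\<dots> \<le> r * c ^ i * real (card (buyers d n C P))"
      using P(2) \<open>0 \<le> r * c ^ i\<close> by (simp add: card_mono finite_buyers mult_left_mono)
    also have "\<dots> = profit d n C P" by (simp add: profit_eq_ppu_card_buyers P(1))
    finally show ?thesis using \<open>i \<le> L\<close> P(1) by blast
  next
    case False
    have r_pos: "0 < r" using a_pos a_le_r by simp
    have "profit d n C Ps \<le> r * c ^ L * ?m"
      using False m_pos by (simp add: profit_eq_ppu_card_buyers)
    also have "\<dots> \<le> r * (c ^ L * n)"
      using card_buyers_le r_pos assms(1) by (simp add: mult_left_mono)
    also have "\<dots> \<le> r" using assms(3) r_pos by (simp add: mult_left_le)
    also have "\<dots> \<le> profit d n C (C j)"
    proof -
      have "j \<in> buyers d n C (C j)" using \<open>j < n\<close> unfolding buyers_def buys_def by auto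
      then have "1 \<le> card (buyers d n C (C j))"
        using finite_buyers by (metis One_nat_def Suc_leI card_gt_0_iff empty_iff)
      then show ?thesis using r_pos \<open>ppu d (C j) = r\<close> by (simp add: profit_eq_ppu_card_buyers)
    qed
    finally have "c * profit d n C Ps \<le> profit d n C (C j)"
      using assms(1,2) profitable by (meson less_imp_le mult_left_le_one_le order_trans)
    then show ?thesis using \<open>ppu d (C j) = r\<close> by (metis le0 mult.right_neutral power_0)
  qed
qed

theorem lemma4:
  fixes d n :: nat and eps :: real and C :: "nat \<Rightarrow> point"
  assumes "d \<ge> 1" and "0 < eps" and "eps < 1" and "n \<ge> 1"
    and "pareto_optimal d n C"
  defines "r \<equiv> Max ((\<lambda>i. ppu d (C i)) ` {..<n})"
    and "E \<equiv> 1 / (1 - eps)"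
  defines "L \<equiv> nat \<lceil>log E (real n)\<rceil>"
  shows "\<forall>Pstar :: point. \<exists>i \<le> L. \<exists>P :: point.
           ppu d P = r * (1 - eps) ^ i \<and>
           profit d n C P \<ge> (1 - eps) * profit d n C Pstar"
proof
  fix Ps :: point
  have ppus: "finite ((\<lambda>i. ppu d (C i)) ` {..<n})" "(\<lambda>i. ppu d (C i)) ` {..<n} \<noteq> {}"
    using assms(4) by (auto simp: lessThan_empty_iff)
  obtain j where "j < n" "ppu d (C j) = r" using Max_in[OF ppus] unfolding r_def by auto
  have r_ub: "ppu d (C i) \<le> r" if "i < n" for i
    unfolding r_def using ppus that by (intro Max_ge) auto
  have "real n \<le> E ^ L"
    unfolding L_def using assms(2-4) by (intro le_power_nat_ceiling_log) (auto simp: E_def)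
  then have "(1 - eps) ^ L * n \<le> 1"
    using assms(3) by (simp add: E_def power_one_over field_simps)
  show "\<exists>i \<le> L. \<exists>P. ppu d P = r * (1 - eps) ^ i \<and> (1 - eps) * profit d n C Ps \<le> profit d n C P"
  proof (cases "0 < profit d n C Ps")
    case True
    then show ?thesis using exists_level_product_if_profitable[of "1 - eps" L n d C r j Ps]
        assms(2,3) \<open>(1 - eps) ^ L * n \<le> 1\<close> r_ub \<open>j < n\<close> \<open>ppu d (C j) = r\<close> by auto
  next
    case False
    obtain P where "ppu d P = r" "buyers d n C P = {}"
      using exists_product_without_buyers[OF assms(1)] by blast
    then have "ppu d P = r * (1 - eps) ^ 0 \<and> (1 - eps) * profit d n C Ps \<le> profit d n C P"
      using False assms(3) by (simp add: profit_eq_ppu_card_buyers mult_nonneg_nonpos)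
    then show ?thesis by blast
  qed
qed

end
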